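(* Let $T\subseteq V$ be any set and $\tilde C\subseteq C$ a nonempty set of colors, and define $\tilde f_c(A)=f_c(A\cup T)$ for $A\subseteq V$, $c\in\tilde C$. For integers $b\ge 0$ let $\widetilde{\mathrm{OPT}}_b=\max_{S\subseteq V,\,|S|\le b}\min_{c\in\tilde C}\tilde f_c(S)$. Let $\gamma>0$ be such that $\tilde f_c(v\mid\emptyset)\le\gamma\,\widetilde{\mathrm{OPT}}_B$ for all $v\in V$ and $c\in\tilde C$. Then for every positive integer $\tilde B\le B$, \[ \widetilde{\mathrm{OPT}}_{\tilde B}\;\ge\;\left(1-\sqrt{3\gamma\frac{B}{\tilde B}\log k}\right)\frac{\tilde B}{B}\,\widetilde{\mathrm{OPT}}_B . \]
   Context: Setup: $V$ is a finite nonempty ground set, $C$ is a finite nonempty set of "colors", $k=|C|$. For each $c\in C$, $f_c\colon 2^V\to\mathbb{R}_{\ge 0}$ is monotone and submodular. $B$ is a positive integer (the budget). $f(T\mid S)=f(S\cup T)-f(S)$ and $f(v\mid S)=f(\{v\}\mid S)$. $\log$ is the natural logarithm. *)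

theory Defs
  imports Complex_Main
begin

definition monotone_set_fun :: "'a set \<Rightarrow> ('a set \<Rightarrow> real) \<Rightarrow> bool" where
  "monotone_set_fun V f \<longleftrightarrow> (\<forall>A B. A \<subseteq> B \<and> B \<subseteq> V \<longrightarrow> f A \<le> f B)"

definition submodular_set_fun :: "'a set \<Rightarrow> ('a set \<Rightarrow> real) \<Rightarrow> bool" where
  "submodular_set_fun V f \<longleftrightarrow>
     (\<forall>A B. A \<subseteq> V \<and> B \<subseteq> V \<longrightarrow> f (A \<union> B) + f (A \<inter> B) \<le> f A + f B)"

definition nonneg_set_fun :: "'a set \<Rightarrow> ('a set \<Rightarrow> real) \<Rightarrow> bool" where
  "nonneg_set_fun V f \<longleftrightarrow> (\<forall>A. A \<subseteq> V \<longrightarrow> 0 \<le> f A)"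

definition marg :: "('a set \<Rightarrow> real) \<Rightarrow> 'a set \<Rightarrow> 'a set \<Rightarrow> real" where
  "marg f X S = f (S \<union> X) - f S"

definition min_obj :: "('c \<Rightarrow> 'a set \<Rightarrow> real) \<Rightarrow> 'c set \<Rightarrow> 'a set \<Rightarrow> 'a set \<Rightarrow> real" where
  "min_obj f Ct T S = Min ((\<lambda>c. f c (S \<union> T)) ` Ct)"

definition OPT_tilde :: "'a set \<Rightarrow> ('c \<Rightarrow> 'a set \<Rightarrow> real) \<Rightarrow> 'c set \<Rightarrow> 'a set \<Rightarrow> nat \<Rightarrow> real" where
  "OPT_tilde V f Ct T b = Max {min_obj f Ct T S | S. S \<subseteq> V \<and> card S \<le> b}"

end

theory Submission
  imports Defs
begin

text \<open>Let \<open>S\<close> be optimal for budget \<open>B\<close> with value \<open>P\<close>. A uniformly random \<open>Bt\<close>-subset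
of \<open>S\<close> keeps, by submodularity, at least the fraction \<open>Bt/|S|\<close> of every \<open>f\<^sub>c(\<cdot> \<union> T)\<close>
in expectation; since single elements contribute at most \<open>\<gamma>P\<close>, an exponential-moment bound
and a union bound over the \<open>k\<close> colors show that all colors lose at most a
\<open>\<delta> = \<surd>(3\<gamma>(B/Bt) log k)\<close> fraction at once. This is derandomized by conditional expectations:
adding elements of \<open>S\<close> one at a time, the pessimistic estimator
\<open>\<Sum>\<^sub>c exp (w\<^sub>i (\<theta> D\<^sub>c(X) - K))\<close> with deficits \<open>D\<^sub>c(X) = max 0 (P - f\<^sub>c(X \<union> T))\<close> and weights
\<open>w\<^sub>i = (|S| - Bt)/(|S| - i)\<close> never has to increase, and at \<open>i = Bt\<close>, where \<open>w\<^sub>i = 1\<close>, it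
bounds every single deficit.\<close>

lemma exp_minus_le_quadratic:
  fixes x :: real
  assumes "0 \<le> x"
  shows "exp (- x) \<le> 1 - x + x\<^sup>2 / 2"
proof -
  have lower: "1 + x + x\<^sup>2 / 2 \<le> exp x"
    using exp_lower_Taylor_quadratic[OF assms] .
  have pos: "0 < 1 + x + x\<^sup>2 / 2"
    using assms by (simp add: add_pos_nonneg)
  have "1 \<le> (1 - x + x\<^sup>2 / 2) * (1 + x + x\<^sup>2 / 2)"
    using assms by (simp add: algebra_simps power2_eq_square)
  then have "1 / (1 + x + x\<^sup>2 / 2) \<le> 1 - x + x\<^sup>2 / 2"
    by (simp only: pos_divide_le_eq[OF pos])
  moreover have "exp (- x) \<le> 1 / (1 + x + x\<^sup>2 / 2)"
    unfolding exp_minus inverse_eq_divide using lower pos by (intro divide_left_mono) auto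
  ultimately show ?thesis
    by linarith
qed

lemma exists_le_of_sum_le_card_mult:
  fixes h :: "'a \<Rightarrow> real"
  assumes "finite R" "R \<noteq> {}" "(\<Sum>s\<in>R. h s) \<le> real (card R) * v"
  shows "\<exists>s\<in>R. h s \<le> v"
proof (rule ccontr)
  assume "\<not> (\<exists>s\<in>R. h s \<le> v)"
  then have "(\<Sum>s\<in>R. v) < (\<Sum>s\<in>R. h s)"
    using assms(1,2) by (intro sum_strict_mono) auto
  with assms(3) show False
    by simp
qed

lemma exists_subset_potential_le:
  fixes \<Phi> :: "nat \<Rightarrow> 'a set \<Rightarrow> real"
  assumes "finite S" "n \<le> card S"
    and "\<And>i X. i < n \<Longrightarrow> X \<subseteq> S \<Longrightarrow> card X = i \<Longrightarrow>
           (\<Sum>s\<in>S - X. \<Phi> (Suc i) (insert s X)) \<le> real (card (S - X)) * \<Phi> i X"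
  shows "\<exists>X\<subseteq>S. card X = n \<and> \<Phi> n X \<le> \<Phi> 0 {}"
  using assms(2,3)
proof (induction n)
  case 0
  show ?case
    by (intro exI[of _ "{}"]) simp
next
  case (Suc n)
  have "\<exists>X\<subseteq>S. card X = n \<and> \<Phi> n X \<le> \<Phi> 0 {}"
    using Suc.prems by (intro Suc.IH) auto
  then obtain X where X: "X \<subseteq> S" "card X = n" "\<Phi> n X \<le> \<Phi> 0 {}"
    by blast
  have "finite X"
    using X(1) assms(1) finite_subset by blast
  then have "card (S - X) = card S - n"
    using X(1,2) by (simp add: card_Diff_subset)
  then have "S - X \<noteq> {}"
    using Suc.prems(1) by (intro notI) simp
  moreover have "(\<Sum>s\<in>S - X. \<Phi> (Suc n) (insert s X)) \<le> real (card (S - X)) * \<Phi> n X"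
    using Suc.prems(2) X(1,2) by simp
  ultimately obtain s where s: "s \<in> S - X" "\<Phi> (Suc n) (insert s X) \<le> \<Phi> n X"
    using exists_le_of_sum_le_card_mult[of "S - X"] assms(1) by auto
  have "insert s X \<subseteq> S" "card (insert s X) = Suc n" "\<Phi> (Suc n) (insert s X) \<le> \<Phi> 0 {}"
    using s X \<open>finite X\<close> by auto
  then show ?case
    by blast
qed

lemma min_sum_le_sum_min:
  fixes h :: "'a \<Rightarrow> real"
  assumes "finite R" "\<And>s. s \<in> R \<Longrightarrow> 0 \<le> h s" "0 \<le> d"
  shows "min d (\<Sum>s\<in>R. h s) \<le> (\<Sum>s\<in>R. min d (h s))"
  using assms
proof (induction R rule: finite_induct)
  case empty
  then show ?case
    by simp
next
  case (insert x F)
  have min_add: "min d (u + v) \<le> min d u + min d v" if "0 \<le> u" "0 \<le> v" for u v :: real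
    using that insert.prems(2) by (auto simp: min_def)
  have "min d (h x + (\<Sum>s\<in>F. h s)) \<le> min d (h x) + min d (\<Sum>s\<in>F. h s)"
    using insert.prems(1) by (intro min_add) (auto intro: sum_nonneg)
  also have "\<dots> \<le> min d (h x) + (\<Sum>s\<in>F. min d (h s))"
    using insert.IH insert.prems by (intro add_left_mono) blast
  finally show ?case
    using insert.hyps by simp
qed

text \<open>Replacing the weight \<open>q/(r - 1)\<close> of step \<open>i + 1\<close> by the weight \<open>q/r\<close> of step \<open>i\<close>
absorbs the second-order loss, which is at most \<open>K = a\<theta>\<^sup>2P/2\<close>.\<close>

lemma potential_exponent_le:
  fixes q r \<theta> a D P :: real
  assumes "1 < r" "0 \<le> q" "0 \<le> a" "0 \<le> D" "D \<le> P"
  shows "q / (r - 1) * (\<theta> * D - a * \<theta>\<^sup>2 * P / 2) - q / (r - 1) * \<theta> * (1 - \<theta> * a / 2) * D / r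
           \<le> q / r * (\<theta> * D - a * \<theta>\<^sup>2 * P / 2)"
proof -
  define c where "c = q / (r * (r - 1))"
  define E where "E = \<theta> * D - a * \<theta>\<^sup>2 * P / 2"
  have "q / (r - 1) - q / r = c"
    using assms(1) by (simp add: c_def field_simps)
  moreover have "q / (r - 1) * \<theta> * (1 - \<theta> * a / 2) * D / r = c * (\<theta> * (1 - \<theta> * a / 2) * D)"
    by (simp add: c_def ac_simps)
  ultimately have "q / (r - 1) * E - q / (r - 1) * \<theta> * (1 - \<theta> * a / 2) * D / r - q / r * E
                     = c * (E - \<theta> * (1 - \<theta> * a / 2) * D)"
    by (metis left_diff_distrib right_diff_distrib diff_diff_eq2 diff_right_commute)
  also have "\<dots> = c * (a * \<theta>\<^sup>2 * (D - P) / 2)"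
    by (simp add: E_def power2_eq_square algebra_simps)
  also have "\<dots> \<le> 0"
    using assms by (intro mult_nonneg_nonpos) (auto simp: c_def mult_nonneg_nonpos)
  finally show ?thesis
    by (simp add: E_def)
qed

definition deficit :: "('a set \<Rightarrow> real) \<Rightarrow> real \<Rightarrow> 'a set \<Rightarrow> real" where
  "deficit g P X = max 0 (P - g X)"

lemma deficit_nonneg: "0 \<le> deficit g P X"
  by (simp add: deficit_def)

lemma target_diff_le_deficit: "P - g X \<le> deficit g P X"
  by (simp add: deficit_def)

text \<open>Abstracts \<open>X \<mapsto> f\<^sub>c(X \<union> T)\<close> on the subsets of an optimal set \<open>S\<close> of value \<open>P\<close>;
\<open>gain_cover\<close> is the only consequence of submodularity that the argument needs.\<close>

locale target_cover =
  fixes S :: "'a set" and g :: "'a set \<Rightarrow> real" and P a :: real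
  assumes finite_S: "finite S"
    and mono: "X \<subseteq> Y \<Longrightarrow> Y \<subseteq> S \<Longrightarrow> g X \<le> g Y"
    and nonneg: "X \<subseteq> S \<Longrightarrow> 0 \<le> g X"
    and gain_le: "X \<subseteq> S \<Longrightarrow> s \<in> S \<Longrightarrow> g (insert s X) - g X \<le> a"
    and gain_cover: "X \<subseteq> S \<Longrightarrow> g S - g X \<le> (\<Sum>s\<in>S - X. g (insert s X) - g X)"
    and target_le: "P \<le> g S"
    and target_nonneg: "0 \<le> P"
    and gain_bound_nonneg: "0 \<le> a"
begin

abbreviation D :: "'a set \<Rightarrow> real" where
  "D \<equiv> deficit g P"

lemma deficit_le_target: "X \<subseteq> S \<Longrightarrow> D X \<le> P"
  using nonneg[of X] target_nonneg by (simp add: deficit_def)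

lemma card_Diff_real: "X \<subseteq> S \<Longrightarrow> real (card (S - X)) = real (card S) - real (card X)"
  using finite_S by (simp add: card_Diff_subset finite_subset card_mono of_nat_diff)

lemma deficit_decrease_bounds:
  assumes "X \<subseteq> S" "s \<in> S"
  shows "0 \<le> D X - D (insert s X)" "D X - D (insert s X) \<le> a"
proof -
  have "g X \<le> g (insert s X)" "g (insert s X) - g X \<le> a"
    using assms by (auto intro: mono gain_le)
  then show "0 \<le> D X - D (insert s X)" "D X - D (insert s X) \<le> a"
    using gain_bound_nonneg by (auto simp: deficit_def max_def)
qed

lemma deficit_le_sum_decrease:
  assumes X: "X \<subseteq> S"
  shows "D X \<le> (\<Sum>s\<in>S - X. D X - D (insert s X))"
proof (cases "g X < P")
  case False
  then have "D X = 0"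
    by (simp add: deficit_def)
  moreover have "0 \<le> (\<Sum>s\<in>S - X. D X - D (insert s X))"
    using deficit_decrease_bounds(1)[OF X] by (intro sum_nonneg) auto
  ultimately show ?thesis
    by simp
next
  case True
  define d where "d = P - g X"
  have d: "0 < d" "D X = d"
    using True by (simp_all add: d_def deficit_def)
  have gains_nonneg: "0 \<le> g (insert s X) - g X" if "s \<in> S - X" for s
    using that X by (auto intro: mono)
  have decrease: "D X - D (insert s X) = min d (g (insert s X) - g X)" if "s \<in> S - X" for s
    using d by (auto simp: deficit_def d_def max_def min_def)
  have "d \<le> (\<Sum>s\<in>S - X. g (insert s X) - g X)"
    using gain_cover[OF X] target_le by (simp add: d_def)
  then have "d = min d (\<Sum>s\<in>S - X. g (insert s X) - g X)"
    by simp
  also have "\<dots> \<le> (\<Sum>s\<in>S - X. min d (g (insert s X) - g X))"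
    using finite_S gains_nonneg d by (intro min_sum_le_sum_min) auto
  finally show ?thesis
    using d decrease by simp
qed

lemma sum_deficit_insert_le:
  assumes "X \<subseteq> S"
  shows "(\<Sum>s\<in>S - X. D (insert s X)) \<le> (real (card (S - X)) - 1) * D X"
  using deficit_le_sum_decrease[OF assms] by (simp add: sum_subtractf algebra_simps)

text \<open>Each factor is bounded by \<open>exp (- y) \<le> 1 - y + y\<^sup>2/2\<close>, a single decrease being at most
\<open>a\<close>; the resulting linear bound is turned back into an exponential by \<open>1 + y \<le> exp y\<close>.\<close>

lemma sum_exp_deficit_decrease_le:
  assumes X: "X \<subseteq> S" and R: "0 < card (S - X)"
    and u: "0 \<le> u" "u \<le> \<theta>" and \<theta>a: "\<theta> * a \<le> 2"
  shows "(\<Sum>s\<in>S - X. exp (- u * (D X - D (insert s X))))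
           \<le> real (card (S - X)) * exp (- u * (1 - \<theta> * a / 2) * D X / real (card (S - X)))"
proof -
  define r where "r = real (card (S - X))"
  define c where "c = u * (1 - \<theta> * a / 2)"
  have c: "0 \<le> c"
    using u \<theta>a by (simp add: c_def)
  have term_le: "exp (- u * (D X - D (insert s X))) \<le> 1 - c * (D X - D (insert s X))"
    if "s \<in> S - X" for s
  proof -
    define t where "t = D X - D (insert s X)"
    have t: "0 \<le> t" "t \<le> a"
      using deficit_decrease_bounds[OF X] that by (auto simp: t_def)
    have "(u * t)\<^sup>2 \<le> (u * t) * (\<theta> * a)"
      unfolding power2_eq_square using t u by (intro mult_left_mono mult_mono) auto
    then have "1 - u * t + (u * t)\<^sup>2 / 2 \<le> 1 - c * t"
      by (simp add: c_def algebra_simps)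
    moreover have "exp (- (u * t)) \<le> 1 - u * t + (u * t)\<^sup>2 / 2"
      using t u by (intro exp_minus_le_quadratic) simp
    ultimately show ?thesis
      by (simp add: t_def)
  qed
  have "(\<Sum>s\<in>S - X. exp (- u * (D X - D (insert s X))))
          \<le> (\<Sum>s\<in>S - X. 1 - c * (D X - D (insert s X)))"
    using term_le by (intro sum_mono)
  also have "\<dots> = r - c * (\<Sum>s\<in>S - X. D X - D (insert s X))"
    by (simp add: r_def sum_subtractf sum_distrib_left[symmetric])
  also have "\<dots> \<le> r - c * D X"
    using deficit_le_sum_decrease[OF X] c by (simp add: mult_left_mono)
  also have "\<dots> = r * (1 + - c * D X / r)"
    using R by (simp add: r_def field_simps)
  also have "\<dots> \<le> r * exp (- c * D X / r)"
    using R by (intro mult_left_mono exp_ge_add_one_self) (auto simp: r_def)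
  finally show ?thesis
    by (simp add: r_def c_def mult.assoc)
qed

lemma exp_potential_step:
  assumes X: "X \<subseteq> S" "card X = i" and i: "i < n" and n: "n < card S"
    and \<theta>: "0 \<le> \<theta>" "\<theta> * a \<le> 2" and K: "K = a * \<theta>\<^sup>2 * P / 2"
  shows "(\<Sum>s\<in>S - X. exp ((real (card S) - real n) / (real (card S) - real (Suc i))
                             * (\<theta> * D (insert s X) - K)))
           \<le> real (card (S - X))
               * exp ((real (card S) - real n) / (real (card S) - real i) * (\<theta> * D X - K))"
proof -
  define q where "q = real (card S) - real n"
  define r where "r = real (card (S - X))"
  define w where "w = q / (r - 1)"
  define u where "u = w * \<theta>"
  have r: "r = real (card S) - real i" "1 < r"
    using card_Diff_real[OF X(1)] X(2) i n by (auto simp: r_def)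
  have q: "0 \<le> q" "q \<le> r - 1"
    using i n r by (auto simp: q_def)
  have w: "q / (real (card S) - real (Suc i)) = w"
    using r by (simp add: w_def)
  have "0 \<le> w" "w \<le> 1"
    using q r by (auto simp: w_def)
  then have u: "0 \<le> u" "u \<le> \<theta>"
    using \<theta> by (auto simp: u_def mult_left_le_one_le)
  have factor: "exp (w * (\<theta> * D (insert s X) - K))
                  = exp (w * (\<theta> * D X - K)) * exp (- u * (D X - D (insert s X)))" for s
    by (simp add: u_def exp_add[symmetric] algebra_simps)
  have "(\<Sum>s\<in>S - X. exp (w * (\<theta> * D (insert s X) - K)))
          = exp (w * (\<theta> * D X - K)) * (\<Sum>s\<in>S - X. exp (- u * (D X - D (insert s X))))"
    by (simp add: factor sum_distrib_left)
  also have "\<dots> \<le> exp (w * (\<theta> * D X - K)) * (r * exp (- u * (1 - \<theta> * a / 2) * D X / r))"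
    using r u \<theta> unfolding r_def by (intro mult_left_mono sum_exp_deficit_decrease_le X) auto
  also have "\<dots> = r * exp (w * (\<theta> * D X - K) + - u * (1 - \<theta> * a / 2) * D X / r)"
    by (simp only: exp_add mult.left_commute)
  also have "\<dots> \<le> r * exp (q / r * (\<theta> * D X - K))"
  proof -
    have "w * (\<theta> * D X - K) + - u * (1 - \<theta> * a / 2) * D X / r
            = q / (r - 1) * (\<theta> * D X - a * \<theta>\<^sup>2 * P / 2)
                - q / (r - 1) * \<theta> * (1 - \<theta> * a / 2) * D X / r"
      by (simp add: u_def w_def K)
    also have "\<dots> \<le> q / r * (\<theta> * D X - K)"
      using potential_exponent_le[OF r(2) q(1) gain_bound_nonneg deficit_nonneg deficit_le_target[OF X(1)]]
      by (simp add: K)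
    finally show ?thesis
      using r(2) by simp
  qed
  finally show ?thesis
    unfolding w q_def[symmetric] r(1)[symmetric] r_def .
qed

text \<open>For a single function no exponential is needed: the rescaled deficit \<open>D X / (|S| - |X|)\<close>
is already a pessimistic estimator.\<close>

lemma exists_subset_ge_fraction:
  assumes n: "n < card S"
  shows "\<exists>X\<subseteq>S. card X = n \<and> real n / real (card S) * P \<le> g X"
proof -
  define m where "m = real (card S)"
  define \<Phi> where "\<Phi> i X = D X / (m - real i)" for i X
  have "(\<Sum>s\<in>S - X. \<Phi> (Suc i) (insert s X)) \<le> real (card (S - X)) * \<Phi> i X"
    if "i < n" "X \<subseteq> S" "card X = i" for i X
  proof -
    have r: "real (card (S - X)) = m - real i" "1 < m - real i"
      using card_Diff_real[OF that(2)] that n by (auto simp: m_def)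
    have "(\<Sum>s\<in>S - X. \<Phi> (Suc i) (insert s X)) = (\<Sum>s\<in>S - X. D (insert s X)) / (m - real i - 1)"
      by (simp add: \<Phi>_def sum_divide_distrib algebra_simps)
    also have "\<dots> \<le> D X"
      using sum_deficit_insert_le[OF that(2)] r by (simp add: pos_divide_le_eq mult.commute)
    also have "\<dots> = real (card (S - X)) * \<Phi> i X"
      using r by (simp add: \<Phi>_def)
    finally show ?thesis .
  qed
  then obtain X where X: "X \<subseteq> S" "card X = n" "\<Phi> n X \<le> \<Phi> 0 {}"
    using exists_subset_potential_le[OF finite_S less_imp_le[OF n]] by blast
  have m: "real n < m"
    using n by (simp add: m_def)
  have "(P - g X) / (m - real n) \<le> D X / (m - real n)"
    using target_diff_le_deficit[of P g X] m by (simp add: divide_right_mono)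
  also have "\<dots> \<le> D {} / m"
    using X(3) by (simp add: \<Phi>_def)
  also have "\<dots> \<le> P / m"
    using deficit_le_target[of "{}"] m by (simp add: divide_right_mono)
  finally have "(P - g X) / (m - real n) \<le> P / m" .
  then have "P - g X \<le> P * (m - real n) / m"
    using m by (simp add: pos_divide_le_eq)
  then show ?thesis
    using X(1,2) m by (auto simp: m_def field_simps)
qed

end

lemma sum_exp_potential_step:
  fixes g :: "'c \<Rightarrow> 'a set \<Rightarrow> real"
  assumes cover: "\<And>c. c \<in> Ct \<Longrightarrow> target_cover S (g c) P a"
    and X: "X \<subseteq> S" "card X = i" and i: "i < n" and n: "n < card S" and \<theta>: "0 \<le> \<theta>" "\<theta> * a \<le> 2"
  defines "\<Phi> j Y \<equiv> \<Sum>c\<in>Ct. exp ((real (card S) - real n) / (real (card S) - real j)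
                                  * (\<theta> * deficit (g c) P Y - a * \<theta>\<^sup>2 * P / 2))"
  shows "(\<Sum>s\<in>S - X. \<Phi> (Suc i) (insert s X)) \<le> real (card (S - X)) * \<Phi> i X"
proof -
  have "(\<Sum>s\<in>S - X. \<Phi> (Suc i) (insert s X))
          = (\<Sum>c\<in>Ct. \<Sum>s\<in>S - X. exp ((real (card S) - real n) / (real (card S) - real (Suc i))
                                 * (\<theta> * deficit (g c) P (insert s X) - a * \<theta>\<^sup>2 * P / 2)))"
    unfolding \<Phi>_def by (rule sum.swap)
  also have "\<dots> \<le> (\<Sum>c\<in>Ct. real (card (S - X)) * exp ((real (card S) - real n) / (real (card S) - real i)
                                 * (\<theta> * deficit (g c) P X - a * \<theta>\<^sup>2 * P / 2)))"
    using target_cover.exp_potential_step[OF cover X i n \<theta> refl] by (intro sum_mono)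
  also have "\<dots> = real (card (S - X)) * \<Phi> i X"
    by (simp add: \<Phi>_def sum_distrib_left)
  finally show ?thesis .
qed

text \<open>At the end of the descent the weight is 1, so each single summand \<open>exp (\<theta> D\<^sub>c(X) - K)\<close>
is bounded by the initial potential \<open>|Ct| exp ((1 - n/|S|)(\<theta> P - K))\<close>.\<close>

lemma exists_subset_exp_potential:
  fixes g :: "'c \<Rightarrow> 'a set \<Rightarrow> real"
  assumes cover: "\<And>c. c \<in> Ct \<Longrightarrow> target_cover S (g c) P a"
    and Ct: "finite Ct" "Ct \<noteq> {}" and n: "n < card S" and \<theta>: "0 < \<theta>" "\<theta> * a \<le> 2"
  shows "\<exists>X\<subseteq>S. card X = n \<and> (\<forall>c\<in>Ct. \<theta> * (real n / real (card S) * P - g c X)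
                                  \<le> ln (real (card Ct)) + real n / real (card S) * (a * \<theta>\<^sup>2 * P / 2))"
proof -
  define m where "m = real (card S)"
  define x where "x = real n / m"
  define K where "K = a * \<theta>\<^sup>2 * P / 2"
  define \<Phi> where "\<Phi> i X = (\<Sum>c\<in>Ct. exp ((m - real n) / (m - real i) * (\<theta> * deficit (g c) P X - K)))"
    for i X
  obtain c0 where "c0 \<in> Ct"
    using Ct(2) by blast
  then interpret c0: target_cover S "g c0" P a
    by (rule cover)
  have m: "0 < m" "real n < m"
    using n by (auto simp: m_def)
  have "(\<Sum>s\<in>S - X. \<Phi> (Suc i) (insert s X)) \<le> real (card (S - X)) * \<Phi> i X"
    if "i < n" "X \<subseteq> S" "card X = i" for i X
    unfolding \<Phi>_def m_def K_def
    by (rule sum_exp_potential_step[OF cover that(2,3,1) n less_imp_le[OF \<theta>(1)] \<theta>(2)])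
  then obtain X where X: "X \<subseteq> S" "card X = n" "\<Phi> n X \<le> \<Phi> 0 {}"
    using exists_subset_potential_le[OF c0.finite_S less_imp_le[OF n]] by blast
  have "\<Phi> 0 {} \<le> (\<Sum>c\<in>Ct. exp ((1 - x) * (\<theta> * P - K)))"
    unfolding \<Phi>_def
  proof (intro sum_mono)
    fix c assume "c \<in> Ct"
    then have "deficit (g c) P {} \<le> P"
      using target_cover.deficit_le_target[OF cover] by blast
    moreover have "(m - real n) / (m - real 0) = 1 - x" "0 \<le> 1 - x"
      using m by (auto simp: x_def field_simps)
    ultimately show "exp ((m - real n) / (m - real 0) * (\<theta> * deficit (g c) P {} - K))
                       \<le> exp ((1 - x) * (\<theta> * P - K))"
      using \<theta>(1) by (auto intro!: mult_left_mono)
  qed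
  also have "\<dots> = exp (ln (real (card Ct)) + (1 - x) * (\<theta> * P - K))"
    using Ct by (simp add: exp_add card_gt_0_iff)
  finally have \<Phi>0: "\<Phi> 0 {} \<le> exp (ln (real (card Ct)) + (1 - x) * (\<theta> * P - K))" .
  have "\<theta> * (x * P - g c X) \<le> ln (real (card Ct)) + x * K" if c: "c \<in> Ct" for c
  proof -
    have "exp (\<theta> * deficit (g c) P X - K) \<le> (\<Sum>c\<in>Ct. exp (\<theta> * deficit (g c) P X - K))"
      using c Ct(1) by (intro member_le_sum) auto
    also have "\<dots> = \<Phi> n X"
      using m by (simp add: \<Phi>_def)
    finally have "exp (\<theta> * deficit (g c) P X - K) \<le> exp (ln (real (card Ct)) + (1 - x) * (\<theta> * P - K))"
      using X(3) \<Phi>0 by linarith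
    then have "\<theta> * deficit (g c) P X - K \<le> ln (real (card Ct)) + (1 - x) * (\<theta> * P - K)"
      by (simp only: exp_le_cancel_iff)
    moreover have "\<theta> * (P - g c X) \<le> \<theta> * deficit (g c) P X"
      using \<theta>(1) target_diff_le_deficit by (intro mult_left_mono) auto
    ultimately show ?thesis
      by (simp add: algebra_simps)
  qed
  then show ?thesis
    using X(1,2) by (auto simp: x_def m_def K_def)
qed

lemma exists_subset_all_ge_exp:
  fixes g :: "'c \<Rightarrow> 'a set \<Rightarrow> real"
  assumes cover: "\<And>c. c \<in> Ct \<Longrightarrow> target_cover S (g c) P (\<gamma> * P)"
    and Ct: "finite Ct" "Ct \<noteq> {}" and n: "n < card S"
    and \<gamma>: "0 < \<gamma>" and P: "0 < P" and \<beta>: "0 < \<beta>" "\<beta> \<le> real n / real (card S)"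
    and \<delta>: "0 < \<delta>" "\<delta> \<le> 2" "3 * \<gamma> * ln (real (card Ct)) \<le> \<delta>\<^sup>2 * \<beta>"
  shows "\<exists>X\<subseteq>S. card X = n \<and> (\<forall>c\<in>Ct. (1 - \<delta>) * \<beta> * P \<le> g c X)"
proof -
  define x where "x = real n / real (card S)"
  define \<theta> where "\<theta> = \<delta> / (\<gamma> * P)"
  have \<theta>: "0 < \<theta>" "\<theta> * (\<gamma> * P) = \<delta>"
    using \<gamma> P \<delta> by (simp_all add: \<theta>_def)
  obtain X where X: "X \<subseteq> S" "card X = n"
    and bound: "\<And>c. c \<in> Ct \<Longrightarrow> \<theta> * (x * P - g c X)
                                    \<le> ln (real (card Ct)) + x * (\<gamma> * P * \<theta>\<^sup>2 * P / 2)"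
    using exists_subset_exp_potential[where g=g and a="\<gamma> * P", OF cover Ct n \<theta>(1)] \<theta>(2) \<delta>(2)
    unfolding x_def by auto
  have "ln (real (card Ct)) \<le> \<delta>\<^sup>2 * \<beta> / (3 * \<gamma>)"
    using \<delta>(3) \<gamma> by (simp add: field_simps)
  also have "\<dots> = \<theta> * (\<delta> * \<beta> * P / 3)"
    using \<gamma> P by (simp add: \<theta>_def power2_eq_square)
  finally have ln_le: "ln (real (card Ct)) \<le> \<theta> * (\<delta> * \<beta> * P / 3)" .
  have quadratic: "x * (\<gamma> * P * \<theta>\<^sup>2 * P / 2) = \<theta> * (x * \<delta> * P / 2)"
    using \<theta>(2) by (simp add: power2_eq_square algebra_simps)
  have "\<beta> * (1 - \<delta> / 2) * P \<le> x * (1 - \<delta> / 2) * P"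
    using \<beta>(2) \<delta>(2) P by (intro mult_right_mono) (auto simp: x_def)
  moreover have "0 \<le> \<delta> * \<beta> * P"
    using \<delta> \<beta> P by simp
  moreover have "x * P - g c X \<le> \<delta> * \<beta> * P / 3 + x * \<delta> * P / 2" if "c \<in> Ct" for c
  proof -
    have "\<theta> * (x * P - g c X) \<le> ln (real (card Ct)) + x * (\<gamma> * P * \<theta>\<^sup>2 * P / 2)"
      using bound[OF that] .
    also have "\<dots> \<le> \<theta> * (\<delta> * \<beta> * P / 3) + \<theta> * (x * \<delta> * P / 2)"
      unfolding quadratic using ln_le by linarith
    finally have "\<theta> * (x * P - g c X) \<le> \<theta> * (\<delta> * \<beta> * P / 3 + x * \<delta> * P / 2)"
      by (simp only: distrib_left)
    then show ?thesis
      using \<theta>(1) by simp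
  qed
  ultimately have "(1 - \<delta>) * \<beta> * P \<le> g c X" if "c \<in> Ct" for c
    using that by (fastforce simp: algebra_simps)
  then show ?thesis
    using X by blast
qed

lemma exists_subset_all_ge:
  fixes g :: "'c \<Rightarrow> 'a set \<Rightarrow> real" and k :: nat
  assumes cover: "\<And>c. c \<in> Ct \<Longrightarrow> target_cover S (g c) P (\<gamma> * P)"
    and Ct: "finite Ct" "Ct \<noteq> {}" "card Ct \<le> k" and n: "n < card S"
    and \<gamma>: "0 < \<gamma>" and P: "0 < P" and \<beta>: "0 < \<beta>" "\<beta> \<le> real n / real (card S)"
    and \<delta>: "0 \<le> \<delta>" "\<delta> < 1" "\<delta>\<^sup>2 * \<beta> = 3 * \<gamma> * ln (real k)"
  shows "\<exists>X\<subseteq>S. card X = n \<and> (\<forall>c\<in>Ct. (1 - \<delta>) * \<beta> * P \<le> g c X)"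
proof -
  obtain c0 where c0: "c0 \<in> Ct"
    using Ct(2) by blast
  have card_Ct: "0 < card Ct"
    using Ct(1,2) by (simp add: card_gt_0_iff)
  show ?thesis
  proof (cases "k = 1")
    case True
    then have "Ct = {c0}"
      using Ct(1,3) c0 by (auto simp: card_le_Suc0_iff_eq)
    moreover obtain X where X: "X \<subseteq> S" "card X = n" "real n / real (card S) * P \<le> g c0 X"
      using target_cover.exists_subset_ge_fraction[OF cover[OF c0] n] by blast
    moreover have "\<delta> = 0"
      using True \<delta>(1,3) \<beta>(1) by simp
    moreover have "\<beta> * P \<le> real n / real (card S) * P"
      using \<beta>(2) P by (intro mult_right_mono) auto
    ultimately show ?thesis
      by (intro exI[of _ X]) auto
  next
    case False
    then have "0 < \<delta>\<^sup>2 * \<beta>"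
      using \<delta>(3) \<gamma> card_Ct Ct(3) by simp
    then have "0 < \<delta>"
      using \<delta>(1) by (cases "\<delta> = 0") auto
    moreover have "3 * \<gamma> * ln (real (card Ct)) \<le> \<delta>\<^sup>2 * \<beta>"
      using \<delta>(3) \<gamma> card_Ct Ct(3) by simp
    ultimately show ?thesis
      using exists_subset_all_ge_exp[where g=g, OF cover Ct(1,2) n \<gamma> P \<beta>] \<delta>(2) by simp
  qed
qed

lemma exists_subset_budget_all_ge:
  fixes g :: "'c \<Rightarrow> 'a set \<Rightarrow> real" and k B Bt :: nat
  assumes cover: "\<And>c. c \<in> Ct \<Longrightarrow> target_cover S (g c) P (\<gamma> * P)"
    and Ct: "finite Ct" "Ct \<noteq> {}" "card Ct \<le> k"
    and \<gamma>: "0 < \<gamma>" and B: "card S \<le> B" "0 < Bt" "Bt \<le> B"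
  shows "\<exists>X\<subseteq>S. card X \<le> Bt \<and> (\<forall>c\<in>Ct. (1 - sqrt (3 * \<gamma> * (real B / real Bt) * ln (real k)))
                                         * (real Bt / real B) * P \<le> g c X)"
proof -
  define \<delta> where "\<delta> = sqrt (3 * \<gamma> * (real B / real Bt) * ln (real k))"
  define \<beta> where "\<beta> = real Bt / real B"
  have "1 \<le> k"
    using Ct by (metis card_gt_0_iff less_one linorder_not_less order_less_le_trans)
  then have \<delta>: "0 \<le> \<delta>" "\<delta>\<^sup>2 * \<beta> = 3 * \<gamma> * ln (real k)"
    using \<gamma> B by (simp_all add: \<delta>_def \<beta>_def)
  have \<beta>: "0 < \<beta>" "\<beta> \<le> 1"
    using B by (simp_all add: \<beta>_def)
  have "\<exists>X\<subseteq>S. card X \<le> Bt \<and> (\<forall>c\<in>Ct. (1 - \<delta>) * \<beta> * P \<le> g c X)"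
  proof (cases "0 < (1 - \<delta>) * \<beta> * P")
    case False
    then show ?thesis
      using target_cover.nonneg[OF cover, of _ "{}"] by (intro exI[of _ "{}"]) force
  next
    case True
    then have \<delta>1: "\<delta> < 1" and P: "0 < P"
      using \<beta> target_cover.target_nonneg[OF cover] Ct(2) by (auto simp: zero_less_mult_iff)
    show ?thesis
    proof (cases "card S \<le> Bt")
      case True
      have "(1 - \<delta>) * \<beta> * P \<le> P"
        using P \<delta> \<delta>1 \<beta> by (intro mult_left_le_one_le mult_le_one) auto
      then show ?thesis
        using True target_cover.target_le[OF cover] by (intro exI[of _ S]) force
    next
      case False
      then have "\<beta> \<le> real Bt / real (card S)"
        unfolding \<beta>_def using B by (intro frac_le) auto
      then show ?thesis
        using exists_subset_all_ge[where g=g, OF cover Ct _ \<gamma> P \<beta>(1) _ \<delta>(1) \<delta>1 \<delta>(2)] False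
        by (metis linorder_not_le order_refl)
    qed
  qed
  then show ?thesis
    by (simp add: \<delta>_def \<beta>_def)
qed

lemma le_min_obj_iff:
  assumes "finite Ct" "Ct \<noteq> {}"
  shows "L \<le> min_obj f Ct T X \<longleftrightarrow> (\<forall>c\<in>Ct. L \<le> f c (X \<union> T))"
  using assms by (simp add: min_obj_def Min_ge_iff)

lemma finite_min_obj_values:
  assumes "finite V"
  shows "finite {min_obj f Ct T S | S. S \<subseteq> V \<and> card S \<le> b}"
proof -
  have "finite {S. S \<subseteq> V \<and> card S \<le> b}"
    using assms by (auto intro: finite_subset[of _ "Pow V"])
  then show ?thesis
    using finite_image_set by blast
qed

lemma min_obj_le_OPT_tilde:
  assumes "finite V" "X \<subseteq> V" "card X \<le> b"
  shows "min_obj f Ct T X \<le> OPT_tilde V f Ct T b"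
  unfolding OPT_tilde_def using assms by (intro Max_ge[OF finite_min_obj_values]) auto

lemma OPT_tilde_attained:
  assumes "finite V"
  obtains S where "S \<subseteq> V" "card S \<le> b" "min_obj f Ct T S = OPT_tilde V f Ct T b"
proof -
  have "min_obj f Ct T {} \<in> {min_obj f Ct T S | S. S \<subseteq> V \<and> card S \<le> b}"
    by auto
  then have "OPT_tilde V f Ct T b \<in> {min_obj f Ct T S | S. S \<subseteq> V \<and> card S \<le> b}"
    unfolding OPT_tilde_def by (intro Max_in[OF finite_min_obj_values[OF assms]]) blast
  then show ?thesis
    using that by auto
qed

lemma submodular_gain_antimono:
  assumes "submodular_set_fun V F" "A \<subseteq> B" "B \<subseteq> V" "s \<in> V - B"
  shows "F (insert s B) - F B \<le> F (insert s A) - F A"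
proof -
  have "insert s A \<subseteq> V"
    using assms(2-4) by auto
  then have "F (insert s A \<union> B) + F (insert s A \<inter> B) \<le> F (insert s A) + F B"
    using assms(1,3) unfolding submodular_set_fun_def by blast
  moreover have "insert s A \<union> B = insert s B" "insert s A \<inter> B = A"
    using assms(2,4) by auto
  ultimately show ?thesis
    by simp
qed

lemma submodular_gain_le_sum_gains:
  assumes sub: "submodular_set_fun V F" and R: "finite R" "X \<union> R \<subseteq> V"
  shows "F (X \<union> R) - F X \<le> (\<Sum>s\<in>R. F (insert s X) - F X)"
  using R
proof (induction R rule: finite_induct)
  case empty
  then show ?case
    by simp
next
  case (insert x R)
  have "F (X \<union> insert x R) - F (X \<union> R) \<le> F (insert x X) - F X"
  proof (cases "x \<in> X")
    case True
    then show ?thesis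
      by (simp add: insert_absorb)
  next
    case False
    then show ?thesis
      using submodular_gain_antimono[OF sub, of X "X \<union> R" x] insert by auto
  qed
  with insert show ?case
    by simp
qed

lemma target_cover_submodular:
  assumes S: "finite S" "S \<subseteq> V" and T: "T \<subseteq> V"
    and F: "nonneg_set_fun V F" "monotone_set_fun V F" "submodular_set_fun V F"
    and gain: "\<And>v. v \<in> V \<Longrightarrow> marg (\<lambda>A. F (A \<union> T)) {v} {} \<le> a"
    and "P \<le> F (S \<union> T)" "0 \<le> P" "0 \<le> a"
  shows "target_cover S (\<lambda>X. F (X \<union> T)) P a"
proof
  fix X Y
  assume "X \<subseteq> Y" "Y \<subseteq> S"
  then have "X \<union> T \<subseteq> Y \<union> T" "Y \<union> T \<subseteq> V"
    using S(2) T by auto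
  then show "F (X \<union> T) \<le> F (Y \<union> T)"
    using F(2) unfolding monotone_set_fun_def by blast
next
  fix X
  assume "X \<subseteq> S"
  then have "X \<union> T \<subseteq> V"
    using S(2) T by auto
  then show "0 \<le> F (X \<union> T)"
    using F(1) unfolding nonneg_set_fun_def by blast
next
  fix X s
  assume X: "X \<subseteq> S" and s: "s \<in> S"
  show "F (insert s X \<union> T) - F (X \<union> T) \<le> a"
  proof (cases "s \<in> X \<union> T")
    case True
    then have "insert s X \<union> T = X \<union> T"
      by blast
    with \<open>0 \<le> a\<close> show ?thesis
      by simp
  next
    case False
    then have "F (insert s (X \<union> T)) - F (X \<union> T) \<le> F (insert s T) - F T"
      using X s S(2) T by (intro submodular_gain_antimono[OF F(3)]) auto
    moreover have "F (insert s T) - F T \<le> a"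
      using gain[of s] s S(2) by (simp add: marg_def subset_iff)
    ultimately show ?thesis
      by simp
  qed
next
  fix X
  assume X: "X \<subseteq> S"
  have "F ((X \<union> T) \<union> (S - X)) - F (X \<union> T) \<le> (\<Sum>s\<in>S - X. F (insert s (X \<union> T)) - F (X \<union> T))"
    using X S T by (intro submodular_gain_le_sum_gains[OF F(3)]) auto
  moreover have "(X \<union> T) \<union> (S - X) = S \<union> T"
    using X by auto
  ultimately show "F (S \<union> T) - F (X \<union> T) \<le> (\<Sum>s\<in>S - X. F (insert s X \<union> T) - F (X \<union> T))"
    by simp
qed (use assms in auto)

theorem lemma6:
  fixes V :: "'a set" and C :: "'c set" and f :: "'c \<Rightarrow> 'a set \<Rightarrow> real"
    and B :: nat and T :: "'a set" and Ct :: "'c set" and \<gamma> :: real and Bt :: nat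
  assumes "finite V" "V \<noteq> {}" "finite C" "C \<noteq> {}"
    and "\<And>c. c \<in> C \<Longrightarrow> nonneg_set_fun V (f c)"
    and "\<And>c. c \<in> C \<Longrightarrow> monotone_set_fun V (f c)"
    and "\<And>c. c \<in> C \<Longrightarrow> submodular_set_fun V (f c)"
    and "B > 0"
    and "T \<subseteq> V" "Ct \<subseteq> C" "Ct \<noteq> {}"
    and "\<gamma> > 0"
    and "\<And>v c. v \<in> V \<Longrightarrow> c \<in> Ct \<Longrightarrow>
           marg (\<lambda>A. f c (A \<union> T)) {v} {} \<le> \<gamma> * OPT_tilde V f Ct T B"
    and "Bt > 0" "Bt \<le> B"
  shows "OPT_tilde V f Ct T Bt \<ge>
           (1 - sqrt (3 * \<gamma> * (real B / real Bt) * ln (real (card C))))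
             * (real Bt / real B) * OPT_tilde V f Ct T B"
proof -
  define P where "P = OPT_tilde V f Ct T B"
  define L where "L = (1 - sqrt (3 * \<gamma> * (real B / real Bt) * ln (real (card C)))) * (real Bt / real B) * P"
  have Ct: "finite Ct"
    using assms(3,10) finite_subset by blast
  obtain S where S: "S \<subseteq> V" "card S \<le> B" "min_obj f Ct T S = P"
    using OPT_tilde_attained[OF assms(1)] unfolding P_def by blast
  have "S \<union> T \<subseteq> V"
    using S(1) assms(9) by auto
  then have "0 \<le> f c (S \<union> T)" if "c \<in> Ct" for c
    using assms(5) that assms(10) unfolding nonneg_set_fun_def by blast
  then have "0 \<le> P"
    using S(3) le_min_obj_iff[OF Ct assms(11)] by blast
  have "P \<le> f c (S \<union> T)" if "c \<in> Ct" for c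
    using S(3) le_min_obj_iff[OF Ct assms(11)] that by blast
  then have cover: "target_cover S (\<lambda>X. f c (X \<union> T)) P (\<gamma> * P)" if "c \<in> Ct" for c
    using that S(1) \<open>0 \<le> P\<close> assms(1,5-7,9,10,12,13) finite_subset
    by (intro target_cover_submodular) (auto simp: P_def)
  obtain X where X: "X \<subseteq> S" "card X \<le> Bt" "\<forall>c\<in>Ct. L \<le> f c (X \<union> T)"
    using exists_subset_budget_all_ge[where g="\<lambda>c X. f c (X \<union> T)", OF cover Ct assms(11)
        card_mono[OF assms(3,10)] assms(12) S(2) assms(14,15)]
    unfolding L_def by blast
  have "L \<le> min_obj f Ct T X"
    using X(3) le_min_obj_iff[OF Ct assms(11)] by blast
  also have "\<dots> \<le> OPT_tilde V f Ct T Bt"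
    using X S(1) assms(1) by (intro min_obj_le_OPT_tilde) auto
  finally show ?thesis
    by (simp add: L_def P_def)
qed

end
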